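(* Let $N\geq 3$. Let $p\in C^{0,\alpha}_{\rm loc}(\mathbb{R}^N)$ (for some $0<\alpha<1$) be non-negative, and let $f:[0,\infty)\to[0,\infty)$ be a non-decreasing function with $f\in C^{0,\alpha}_{\rm loc}[0,\infty)$, $f(0)=0$, $f>0$ on $(0,\infty)$, and $\Lambda:=\sup_{s\geq 1} f(s)/s<\infty$. For $r\geq0$ set $\varphi(r)=\max_{|x|=r}p(x)$, $\psi(r)=\min_{|x|=r}p(x)$, $h(r)=\varphi(r)-\psi(r)$, $\Lambda_N=\Lambda/(N-2)$ and $\Psi(r)=\exp\left(\Lambda_N\int_0^r s\psi(s)\,ds\right)$. Assume $$\int_0^\infty r\,h(r)\,\Psi(r)\,dr<\infty\qquad\text{and}\qquad \int_1^\infty e^{-t}t^{1-N}\int_0^t e^s s^{N-1}\psi(s)\,ds\,dt=\infty.$$ Then the equations $$\Delta v+|\nabla v|=\varphi(|x|)f(v)\quad\text{and}\quad \Delta w+|\nabla w|=\psi(|x|)f(w)\qquad\text{in }\mathbb{R}^N$$ have positive entire large solutions $v$ and $w$, respectively (i.e. positive solutions on $\mathbb{R}^N$ tending to $\infty$ as $|x|\to\infty$), such that $v\leq w$ in $\mathbb{R}^N$.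
   Context: An entire large solution is a solution defined on all of $\mathbb{R}^N$ with $u(x)\to\infty$ as $|x|\to\infty$. *)

theory Defs
  imports "HOL-Analysis.Analysis"
begin

definition loc_holder_on :: "real \<Rightarrow> ('a::metric_space) set \<Rightarrow> ('a \<Rightarrow> real) \<Rightarrow> bool" where
  "loc_holder_on \<alpha> S g \<longleftrightarrow>
     (\<forall>K. compact K \<and> K \<subseteq> S \<longrightarrow>
        (\<exists>C. \<forall>x\<in>K. \<forall>y\<in>K. \<bar>g x - g y\<bar> \<le> C * dist x y powr \<alpha>))"

text \<open>u is a classical (C^2) solution on all of the space of
  Delta u + |grad u| = q(|x|) F(u): g is the gradient of u, H x the second
  (Frechet) derivative at x, continuous, and the Laplacian is its trace.\<close>
definition entire_classical_solution ::
  "(real \<Rightarrow> real) \<Rightarrow> (real \<Rightarrow> real) \<Rightarrow> ('a::euclidean_space \<Rightarrow> real) \<Rightarrow> bool" where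
  "entire_classical_solution q F u \<longleftrightarrow>
     (\<exists>g H. (\<forall>x. (u has_derivative (\<lambda>h. g x \<bullet> h)) (at x))
          \<and> (\<forall>x. (g has_derivative H x) (at x))
          \<and> (\<forall>b\<in>Basis. continuous_on UNIV (\<lambda>x. H x b))
          \<and> (\<forall>x. (\<Sum>b\<in>Basis. H x b \<bullet> b) + norm (g x) = q (norm x) * F (u x)))"

definition large :: "('a::real_normed_vector \<Rightarrow> real) \<Rightarrow> bool" where
  "large u \<longleftrightarrow> filterlim u at_top at_infinity"

end

theory Submission
  imports Defs
begin

text \<open>Both solutions are radial. For u(x) = v(|x|) with v' \<ge> 0 the equation
  Delta u + |grad u| = q(|x|) f(u) becomes (e^r r^(N-1) v')' = e^r r^(N-1) q(r) f(v), which is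
  solved with v(0) = a by monotone iteration from the constant a. The iterates stay below the
  barrier a exp(Lambda_N int_0^r s q(s) ds): integrating v' gives at most 1/(N-2) times
  int_0^r s q(s) f(v(s)) ds, and f(v) \<le> Lambda v. The divergence hypothesis, applied to the
  smaller weight psi, forces both solutions to infinity. Finally take v(0) = 1 for phi and w(0) = b
  for psi: while v \<le> w, the excess weight h = phi - psi can lower w - v by at most
  Lambda_N e^(Lambda_N I) I with I = int_0^oo r h(r) Psi(r) dr, so for b large w - v never
  reaches 0.\<close>

section \<open>Continuity on the half-line and spherical envelopes\<close>

lemma continuous_on_atLeast_0I:
  fixes u :: "real \<Rightarrow> real"
  assumes "\<And>R. R > 0 \<Longrightarrow> continuous_on {0..R} u"
  shows "continuous_on {0..} u"
  unfolding continuous_on_eq_continuous_within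
proof
  fix x :: real assume x: "x \<in> {0..}"
  have "continuous (at x within {0..x+1}) u"
    using assms[of "x+1"] x by (simp add: continuous_on_eq_continuous_within)
  moreover have "at x within {0..} = at x within {0..x+1}"
    by (rule at_within_nhd[where S="{..<x+1}"]) auto
  ultimately show "continuous (at x within {0..}) u" by simp
qed

lemma integrable_on_atLeastAtMost_0:
  fixes g :: "real \<Rightarrow> real"
  shows "continuous_on {0..} g \<Longrightarrow> g integrable_on {0..r}"
  by (rule integrable_continuous_real) (erule continuous_on_subset, auto)

lemma continuous_on_integral_atLeast_0:
  fixes g :: "real \<Rightarrow> real"
  assumes "continuous_on {0..} g"
  shows "continuous_on {0..} (\<lambda>r. integral {0..r} g)"
  by (rule continuous_on_atLeast_0I indefinite_integral_continuous_1
      integrable_on_atLeastAtMost_0 assms)+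

lemma integral_has_real_derivative_at:
  fixes g :: "real \<Rightarrow> real"
  assumes "continuous_on {0..} g" "t > 0"
  shows "((\<lambda>u. integral {0..u} g) has_real_derivative g t) (at t)"
proof -
  have "((\<lambda>u. integral {0..u} g) has_real_derivative g t) (at t within {0..t+1})"
    using assms by (intro integral_has_real_derivative continuous_on_subset[OF assms(1)]) auto
  moreover have "at t within {0..t+1} = at t"
    using assms(2) by (intro at_within_interior) simp
  ultimately show ?thesis by simp
qed

lemma tendsto_at_right_0_if_continuous_on:
  fixes u :: "real \<Rightarrow> real"
  assumes "continuous_on {0..} u"
  shows "(u \<longlongrightarrow> u 0) (at_right 0)"
proof -
  have "(u \<longlongrightarrow> u 0) (at 0 within {0..})"
    using assms by (simp add: continuous_on_eq_continuous_within continuous_within)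
  then show ?thesis by (rule tendsto_within_subset) auto
qed

lemma nonneg_by_continuation:
  fixes D :: "real \<Rightarrow> real"
  assumes cont: "continuous_on {0..} D" and D0: "D 0 > 0"
    and step: "\<And>r. r \<ge> 0 \<Longrightarrow> (\<And>s. s \<in> {0..r} \<Longrightarrow> D s \<ge> 0) \<Longrightarrow> D r > 0"
    and r: "r \<ge> 0"
  shows "D r \<ge> 0"
proof (rule ccontr)
  assume "\<not> D r \<ge> 0"
  have zero_below: "\<exists>z\<in>{0..t}. D z = 0" if "t \<ge> 0" "D t \<le> 0" for t
    using IVT2'[of D t 0 0] that D0 continuous_on_subset[OF cont, of "{0..t}"] by fastforce
  define Z where "Z = {s \<in> {0..r}. D s = 0}"
  have "closed Z"
    unfolding Z_def
    by (intro continuous_closed_preimage_constant continuous_on_subset[OF cont]) auto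
  moreover have "bounded Z"
    by (rule bounded_subset[of "{0..r}"]) (auto simp: Z_def)
  ultimately have "compact Z"
    by (simp add: compact_eq_bounded_closed)
  moreover have "Z \<noteq> {}"
    using zero_below[OF r] \<open>\<not> D r \<ge> 0\<close> unfolding Z_def by auto
  ultimately obtain z where z: "z \<in> Z" and z_min: "\<And>s. s \<in> Z \<Longrightarrow> z \<le> s"
    by (meson compact_attains_inf)
  have "D s \<ge> 0" if s: "s \<in> {0..z}" for s
  proof (rule ccontr)
    assume "\<not> D s \<ge> 0"
    then obtain s' where "s' \<in> {0..s}" "D s' = 0" using zero_below[of s] s by auto
    moreover have "z \<le> s'"
      using calculation s z by (intro z_min) (auto simp: Z_def)
    ultimately have "s' = s" using s by auto
    then show False using \<open>D s' = 0\<close> \<open>\<not> D s \<ge> 0\<close> by simp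
  qed
  then have "D z > 0" using z by (intro step) (auto simp: Z_def)
  then show False using z by (simp add: Z_def)
qed

lemma continuous_on_if_loc_holder_on:
  fixes g :: "'a::heine_borel \<Rightarrow> real"
  assumes holder: "loc_holder_on \<alpha> S g" and \<alpha>: "\<alpha> > 0" and S: "closed S"
  shows "continuous_on S g"
  unfolding continuous_on_def
proof
  fix x assume x: "x \<in> S"
  have "compact (S \<inter> cball x 1)" using S by (intro closed_Int_compact) auto
  then obtain C where C: "\<And>y z. y \<in> S \<inter> cball x 1 \<Longrightarrow> z \<in> S \<inter> cball x 1 \<Longrightarrow>
      \<bar>g y - g z\<bar> \<le> C * dist y z powr \<alpha>"
    using holder unfolding loc_holder_on_def by (meson inf_le1)
  have "\<forall>\<^sub>F y in at x within S. norm (g y - g x) \<le> C * dist y x powr \<alpha>"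
    unfolding eventually_at using x by (intro exI[of _ 1]) (auto intro!: C simp: dist_commute)
  moreover have "((\<lambda>y. C * dist y x powr \<alpha>) \<longlongrightarrow> 0) (at x within S)"
    using \<alpha> by (intro tendsto_mult_right_zero tendsto_zero_powrI tendsto_dist_iff[THEN iffD1]
        tendsto_ident_at) auto
  ultimately have "((\<lambda>y. g y - g x) \<longlongrightarrow> 0) (at x within S)"
    by (rule Lim_null_comparison)
  then show "(g \<longlongrightarrow> g x) (at x within S)"
    by (simp add: Lim_null[symmetric])
qed

lemma abs_SUP_diff_le:
  fixes f g :: "'a \<Rightarrow> real"
  assumes "S \<noteq> {}" "bdd_above (f ` S)" "bdd_above (g ` S)" "\<And>y. y \<in> S \<Longrightarrow> \<bar>f y - g y\<bar> \<le> e"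
  shows "\<bar>(SUP y\<in>S. f y) - (SUP y\<in>S. g y)\<bar> \<le> e"
proof -
  have "(SUP y\<in>S. f y) \<le> (SUP y\<in>S. g y) + e"
    using assms cSUP_upper[OF _ assms(3)] by (intro cSUP_least) (fastforce simp: abs_le_iff)+
  moreover have "(SUP y\<in>S. g y) \<le> (SUP y\<in>S. f y) + e"
    using assms cSUP_upper[OF _ assms(2)] by (intro cSUP_least) (fastforce simp: abs_le_iff)+
  ultimately show ?thesis by linarith
qed

lemma sphere_eq_scaleR_image:
  assumes "r \<ge> 0"
  shows "sphere (0::'a::euclidean_space) r = (\<lambda>y. r *\<^sub>R y) ` sphere 0 1"
proof (cases "r = 0")
  case True
  have "sphere (0::'a) 1 \<noteq> {}" by simp
  then obtain y :: 'a where "y \<in> sphere 0 1" by blast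
  then show ?thesis using True by auto
next
  case False
  then show ?thesis using sphere_scale[of r "0::'a" 1] assms by simp
qed

lemma continuous_on_SUP_sphere:
  fixes p :: "'a::euclidean_space \<Rightarrow> real"
  assumes p: "continuous_on UNIV p"
  shows "continuous_on {0..} (\<lambda>r. SUP x\<in>sphere 0 r. p x)"
  unfolding continuous_on_iff
proof (intro ballI allI impI)
  fix x e :: real assume x: "x \<in> {0..}" and e: "e > 0"
  have "uniformly_continuous_on (cball 0 (x + 1)) p"
    by (intro compact_uniformly_continuous continuous_on_subset[OF p]) auto
  then obtain d where d: "d > 0" and close: "\<And>u u'. u \<in> cball 0 (x + 1) \<Longrightarrow> u' \<in> cball 0 (x + 1) \<Longrightarrow>
      dist u' u < d \<Longrightarrow> dist (p u') (p u) < e / 2"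
    unfolding uniformly_continuous_on_def using e by (metis half_gt_zero)
  have bdd: "bdd_above ((\<lambda>y. p (r *\<^sub>R y)) ` sphere 0 1)" for r
    by (intro bounded_imp_bdd_above compact_imp_bounded compact_continuous_image
        continuous_on_compose2[OF p] continuous_intros) auto
  have SUP_eq: "(SUP z\<in>sphere 0 r. p z) = (SUP y\<in>sphere (0::'a) 1. p (r *\<^sub>R y))" if "r \<ge> 0" for r
    by (simp add: sphere_eq_scaleR_image[OF that] image_image)
  show "\<exists>d>0. \<forall>r\<in>{0..}. dist r x < d \<longrightarrow>
      dist (SUP z\<in>sphere 0 r. p z) (SUP z\<in>sphere (0::'a) x. p z) < e"
  proof (intro exI[of _ "min d 1"] conjI ballI impI)
    fix r assume r: "r \<in> {0..}" and rx: "dist r x < min d 1"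
    have "\<bar>p (r *\<^sub>R y) - p (x *\<^sub>R y)\<bar> \<le> e / 2" if "y \<in> sphere 0 1" for y :: 'a
    proof -
      have "dist (r *\<^sub>R y) (x *\<^sub>R y) = dist r x"
        using that by (simp add: dist_norm dist_real_def flip: scaleR_diff_left)
      moreover have "r \<le> x + 1" using rx by (simp add: dist_real_def abs_less_iff)
      ultimately show ?thesis
        using close[of "x *\<^sub>R y" "r *\<^sub>R y"] that x r rx by (simp add: dist_real_def)
    qed
    then have "\<bar>(SUP y\<in>sphere (0::'a) 1. p (r *\<^sub>R y)) - (SUP y\<in>sphere 0 1. p (x *\<^sub>R y))\<bar> \<le> e / 2"
      by (intro abs_SUP_diff_le bdd) auto
    then show "dist (SUP z\<in>sphere 0 r. p z) (SUP z\<in>sphere (0::'a) x. p z) < e"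
      using r x e by (simp add: SUP_eq dist_real_def)
  qed (use d in simp)
qed

lemma INF_eq_uminus_SUP_uminus: "(INF x\<in>S. f x) = - (SUP x\<in>S. - f x :: real)"
  by (simp add: Inf_real_def image_image)

lemma continuous_on_INF_sphere:
  fixes p :: "'a::euclidean_space \<Rightarrow> real"
  assumes "continuous_on UNIV p"
  shows "continuous_on {0..} (\<lambda>r. INF x\<in>sphere 0 r. p x)"
  unfolding INF_eq_uminus_SUP_uminus
  by (intro continuous_intros continuous_on_SUP_sphere assms)

lemma INF_sphere_le_SUP_sphere:
  fixes p :: "'a::euclidean_space \<Rightarrow> real"
  assumes "continuous_on UNIV p" "r \<ge> 0"
  shows "(INF x\<in>sphere 0 r. p x) \<le> (SUP x\<in>sphere 0 r. p x)"
proof -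
  have "bounded (p ` sphere (0::'a) r)"
    by (intro compact_imp_bounded compact_continuous_image continuous_on_subset[OF assms(1)]) auto
  then show ?thesis
    using assms(2) by (intro cInf_le_cSup bounded_imp_bdd_above bounded_imp_bdd_below) auto
qed

section \<open>The radial slope operator\<close>

text \<open>For radial u(x) = v(|x|) with v' \<ge> 0 the equation Delta u + |grad u| = g(|x|) in n
  dimensions reads (e^r r^(n-1) v')' = e^r r^(n-1) g, so v' is the radial slope below.\<close>

definition radial_weight :: "nat \<Rightarrow> real \<Rightarrow> real" where
  "radial_weight n s = exp s * s ^ (n - 1)"

definition weighted_mass :: "nat \<Rightarrow> (real \<Rightarrow> real) \<Rightarrow> real \<Rightarrow> real" where
  "weighted_mass n g t = integral {0..t} (\<lambda>s. radial_weight n s * g s)"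

definition radial_slope :: "nat \<Rightarrow> (real \<Rightarrow> real) \<Rightarrow> real \<Rightarrow> real" where
  "radial_slope n g t = weighted_mass n g t / radial_weight n t"

lemma continuous_on_radial_weight [continuous_intros]: "continuous_on S (radial_weight n)"
  unfolding radial_weight_def by (intro continuous_intros)

lemma radial_weight_pos: "t > 0 \<Longrightarrow> radial_weight n t > 0"
  unfolding radial_weight_def by simp

lemma radial_weight_nonneg: "t \<ge> 0 \<Longrightarrow> radial_weight n t \<ge> 0"
  unfolding radial_weight_def by simp

lemma radial_weight_mono: "0 \<le> s \<Longrightarrow> s \<le> t \<Longrightarrow> radial_weight n s \<le> radial_weight n t"
  unfolding radial_weight_def by (intro mult_mono power_mono) auto

lemma radial_weight_has_real_derivative:
  assumes "n \<ge> 1" "t > 0"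
  shows "(radial_weight n has_real_derivative radial_weight n t * (1 + (real n - 1) / t)) (at t)"
proof -
  have "(radial_weight n has_real_derivative
      exp t * t ^ (n - 1) + exp t * (real (n - 1) * t ^ (n - 1 - 1))) (at t)"
    unfolding radial_weight_def[abs_def] by (auto intro!: derivative_eq_intros)
  moreover have "exp t * t ^ (n - 1) + exp t * (real (n - 1) * t ^ (n - 1 - 1))
      = radial_weight n t * (1 + (real n - 1) / t)"
  proof (cases "n = 1")
    case False
    then have "n - 1 = Suc (n - 1 - 1)" using assms(1) by simp
    then have "t ^ (n - 1) = t * t ^ (n - 1 - 1)" by (metis power_Suc)
    then show ?thesis using assms by (simp add: radial_weight_def field_simps)
  qed (simp add: radial_weight_def)
  ultimately show ?thesis by simp
qed

lemma weighted_mass_has_real_derivative: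
  assumes "continuous_on {0..} g" "t > 0"
  shows "(weighted_mass n g has_real_derivative radial_weight n t * g t) (at t)"
  unfolding weighted_mass_def
  by (rule integral_has_real_derivative_at[OF _ assms(2)]) (intro continuous_intros assms(1))

lemma radial_slope_has_real_derivative:
  assumes "n \<ge> 1" "continuous_on {0..} g" "t > 0"
  shows "(radial_slope n g has_real_derivative g t - radial_slope n g t * (1 + (real n - 1) / t)) (at t)"
proof -
  have "(radial_slope n g has_real_derivative
      (radial_weight n t * g t * radial_weight n t
        - weighted_mass n g t * (radial_weight n t * (1 + (real n - 1) / t)))
      / (radial_weight n t * radial_weight n t)) (at t)"
    unfolding radial_slope_def[abs_def] using radial_weight_pos[OF assms(3), of n]
    by (intro DERIV_divide weighted_mass_has_real_derivative radial_weight_has_real_derivative assms)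
      simp
  moreover have "(radial_weight n t * g t * radial_weight n t
        - weighted_mass n g t * (radial_weight n t * (1 + (real n - 1) / t)))
      / (radial_weight n t * radial_weight n t)
      = g t - radial_slope n g t * (1 + (real n - 1) / t)"
    using radial_weight_pos[OF assms(3), of n] by (simp add: radial_slope_def field_simps)
  ultimately show ?thesis by simp
qed

lemma weighted_mass_mono:
  assumes "continuous_on {0..} g1" "continuous_on {0..} g2" "\<And>s. s \<in> {0..t} \<Longrightarrow> g1 s \<le> g2 s"
    and "t \<ge> 0"
  shows "weighted_mass n g1 t \<le> weighted_mass n g2 t"
  unfolding weighted_mass_def using assms
  by (intro integral_le integrable_on_atLeastAtMost_0 continuous_intros mult_left_mono
      radial_weight_nonneg) auto

lemma radial_slope_mono:
  assumes "continuous_on {0..} g1" "continuous_on {0..} g2" "\<And>s. s \<in> {0..t} \<Longrightarrow> g1 s \<le> g2 s"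
    and "t \<ge> 0"
  shows "radial_slope n g1 t \<le> radial_slope n g2 t"
  unfolding radial_slope_def
  by (rule divide_right_mono[OF weighted_mass_mono[OF assms] radial_weight_nonneg[OF assms(4)]])

lemma radial_slope_nonneg:
  assumes "continuous_on {0..} g" "\<And>s. s \<ge> 0 \<Longrightarrow> g s \<ge> 0" "t \<ge> 0"
  shows "radial_slope n g t \<ge> 0"
  using radial_slope_mono[of "\<lambda>_. 0" g t n] assms
  by (simp add: radial_slope_def weighted_mass_def)

lemma radial_slope_cmult: "radial_slope n (\<lambda>s. c * g s) t = c * radial_slope n g t"
  by (simp add: radial_slope_def weighted_mass_def mult.left_commute[of "radial_weight n _" c])

lemma radial_slope_add:
  assumes "continuous_on {0..} g1" "continuous_on {0..} g2"
  shows "radial_slope n (\<lambda>s. g1 s + g2 s) t = radial_slope n g1 t + radial_slope n g2 t"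
proof -
  have "(\<lambda>s. radial_weight n s * g1 s) integrable_on {0..t}"
    "(\<lambda>s. radial_weight n s * g2 s) integrable_on {0..t}"
    by (intro integrable_on_atLeastAtMost_0 continuous_intros assms)+
  then show ?thesis
    by (simp add: radial_slope_def weighted_mass_def distrib_left add_divide_distrib integral_add)
qed

lemma radial_slope_le_mult_bound:
  assumes "continuous_on {0..} g" "\<And>s. s \<ge> 0 \<Longrightarrow> g s \<ge> 0" "t \<ge> 0"
    and "\<And>s. 0 \<le> s \<Longrightarrow> s \<le> t \<Longrightarrow> g s \<le> M"
  shows "radial_slope n g t \<le> t * M"
proof (cases "t = 0")
  case False
  then have t: "t > 0" using assms(3) by simp
  have "weighted_mass n g t \<le> integral {0..t} (\<lambda>s. radial_weight n t * M)"
    unfolding weighted_mass_def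
  proof (rule integral_le)
    fix s assume "s \<in> {0..t}"
    then show "radial_weight n s * g s \<le> radial_weight n t * M"
      using assms by (intro mult_mono radial_weight_mono radial_weight_nonneg)
        (auto intro: order_trans[OF assms(2) assms(4)])
  qed (intro integrable_on_atLeastAtMost_0 continuous_intros assms(1))+
  also have "\<dots> = t * M * radial_weight n t" using t by simp
  finally show ?thesis
    unfolding radial_slope_def using radial_weight_pos[OF t, of n] by (simp add: divide_le_eq)
qed (simp add: radial_slope_def weighted_mass_def)

lemma continuous_on_radial_slope:
  assumes "n \<ge> 1" "continuous_on {0..} g" "\<And>s. s \<ge> 0 \<Longrightarrow> g s \<ge> 0"
  shows "continuous_on {0..} (radial_slope n g)"
  unfolding continuous_on_eq_continuous_within
proof
  fix x :: real assume x: "x \<in> {0..}"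
  show "continuous (at x within {0..}) (radial_slope n g)"
  proof (cases "x = 0")
    case False
    then have "x > 0" using x by simp
    then have "isCont (radial_slope n g) x"
      by (rule DERIV_isCont[OF radial_slope_has_real_derivative[OF assms(1,2)]])
    then show ?thesis by (rule continuous_at_imp_continuous_at_within)
  next
    case True
    have "bdd_above (g ` {0..1})"
      by (intro bounded_imp_bdd_above compact_imp_bounded compact_continuous_image
          continuous_on_subset[OF assms(2)]) auto
    then obtain M where M: "\<forall>s\<in>{0..1}. g s \<le> M"
      unfolding bdd_above_def by auto
    have upper: "\<forall>\<^sub>F t in at 0 within {0..}. radial_slope n g t \<le> t * M"
      unfolding eventually_at
    proof (intro exI[of _ 1] conjI ballI impI)
      fix t :: real assume "t \<in> {0..}" "t \<noteq> 0 \<and> dist t 0 < 1"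
      then show "radial_slope n g t \<le> t * M"
        using M by (intro radial_slope_le_mult_bound assms(2,3)) (auto simp: dist_real_def)
    qed simp
    have lower: "\<forall>\<^sub>F t in at 0 within {0..}. 0 \<le> radial_slope n g t"
      unfolding eventually_at_filter
      by (intro always_eventually allI impI radial_slope_nonneg assms(2,3)) auto
    have "((\<lambda>t. t * M) \<longlongrightarrow> 0 * M) (at 0 within {0..})"
      by (intro tendsto_intros)
    then have "(radial_slope n g \<longlongrightarrow> 0) (at 0 within {0..})"
      using tendsto_sandwich[OF lower upper tendsto_const] by simp
    then show ?thesis
      using True by (simp add: continuous_within radial_slope_def weighted_mass_def)
  qed
qed

lemma radial_slope_eq_powr:
  assumes "n \<ge> 1" "t > 0"
  shows "radial_slope n g t
    = exp (- t) * t powr (1 - real n) * integral {0..t} (\<lambda>s. exp s * s ^ (n - 1) * g s)"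
proof -
  have "1 - real n = - real (n - 1)" using assms(1) by simp
  then have "t powr (1 - real n) = inverse (t powr real (n - 1))"
    by (simp only: powr_minus)
  also have "\<dots> = inverse (t ^ (n - 1))"
    using assms(2) by (simp only: powr_realpow)
  finally have "t powr (1 - real n) = inverse (t ^ (n - 1))" .
  moreover have "radial_slope n g t
      = integral {0..t} (\<lambda>s. exp s * s ^ (n - 1) * g s) / (exp t * t ^ (n - 1))"
    by (simp add: radial_slope_def weighted_mass_def radial_weight_def)
  ultimately show ?thesis
    by (simp add: exp_minus divide_inverse mult_ac)
qed

lemma integral_radial_slope_le:
  assumes n: "n \<ge> 3" and g: "continuous_on {0..} g" "\<And>s. s \<ge> 0 \<Longrightarrow> g s \<ge> 0" and r: "r \<ge> 0"
  shows "integral {0..r} (radial_slope n g) \<le> integral {0..r} (\<lambda>s. s * g s) / (real n - 2)"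
proof -
  define c where "c = real n - 2"
  have c: "c > 0" using n unfolding c_def by simp
  have n1: "n \<ge> 1" using n by simp
  note slope_cont = continuous_on_radial_slope[OF n1 g]
  have sg_cont: "continuous_on {0..} (\<lambda>s. s * g s)" by (intro continuous_intros g(1))
  txt \<open>With G = radial_slope n g we have G' = g - G (1 + (n-1)/x), hence
    \<Phi>' = - x G(x) / (n-2) \<le> 0 and \<Phi>(0) = 0.\<close>
  define \<Phi> where "\<Phi> x = integral {0..x} (radial_slope n g) + x * radial_slope n g x / c
    - integral {0..x} (\<lambda>s. s * g s) / c" for x
  have "continuous_on {0..} \<Phi>"
    unfolding \<Phi>_def using c
    by (intro continuous_intros continuous_on_integral_atLeast_0 slope_cont sg_cont) auto
  then have cont: "continuous_on {0..r} \<Phi>" by (rule continuous_on_subset) auto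
  have deriv: "\<exists>y. DERIV \<Phi> x :> y \<and> y \<le> 0" if x: "0 < x" "x < r" for x
  proof -
    have "DERIV \<Phi> x :> radial_slope n g x
        + (1 * radial_slope n g x + (g x - radial_slope n g x * (1 + (real n - 1) / x)) * x) / c
        - x * g x / c"
      unfolding \<Phi>_def[abs_def]
      by (intro DERIV_diff DERIV_add DERIV_cdivide DERIV_mult DERIV_ident
          integral_has_real_derivative_at radial_slope_has_real_derivative n1 g(1) slope_cont
          sg_cont x(1))
    moreover have "radial_slope n g x
        + (1 * radial_slope n g x + (g x - radial_slope n g x * (1 + (real n - 1) / x)) * x) / c
        - x * g x / c = - (x * radial_slope n g x) / c"
    proof -
      have "real n - 1 = c + 1" unfolding c_def by simp
      then show ?thesis using c x by (simp add: field_simps)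
    qed
    moreover have "- (x * radial_slope n g x) / c \<le> 0"
      using radial_slope_nonneg[OF g, of x n] x c by simp
    ultimately show ?thesis by auto
  qed
  have "\<Phi> r \<le> \<Phi> 0" by (rule DERIV_nonpos_imp_decreasing_open[OF r deriv cont])
  moreover have "r * radial_slope n g r / c \<ge> 0" using radial_slope_nonneg[OF g r, of n] r c by simp
  ultimately show ?thesis unfolding \<Phi>_def c_def by simp
qed

text \<open>v'(r)/r for the radial solution; the value at 0 is its limit (by l'Hopital).\<close>

definition slope_quotient :: "nat \<Rightarrow> (real \<Rightarrow> real) \<Rightarrow> real \<Rightarrow> real" where
  "slope_quotient n g r = (if r = 0 then g 0 / real n else radial_slope n g r / r)"

lemma slope_quotient_tendsto_0:
  assumes n: "n \<ge> 1" and g: "continuous_on {0..} g"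
  shows "(slope_quotient n g \<longlongrightarrow> g 0 / real n) (at_right 0)"
proof -
  have weight_deriv: "((\<lambda>r. r * radial_weight n r) has_real_derivative radial_weight n t * (t + real n)) (at t)"
    if "t > 0" for t
  proof -
    have "((\<lambda>r. r * radial_weight n r) has_real_derivative
        1 * radial_weight n t + radial_weight n t * (1 + (real n - 1) / t) * t) (at t)"
      by (intro DERIV_mult DERIV_ident radial_weight_has_real_derivative n that)
    then show ?thesis by (rule DERIV_cong) (use that in \<open>simp add: field_simps\<close>)
  qed
  have pos: "\<forall>\<^sub>F r in at_right 0. (0::real) < r"
    by (simp add: eventually_at_right_less)
  have "((\<lambda>r. weighted_mass n g r / (r * radial_weight n r)) \<longlongrightarrow> g 0 / real n) (at_right 0)"
  proof (rule lhopital_right_0)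
    show "(weighted_mass n g \<longlongrightarrow> 0) (at_right 0)"
      using tendsto_at_right_0_if_continuous_on[of "weighted_mass n g"]
        continuous_on_integral_atLeast_0[OF continuous_on_mult[OF continuous_on_radial_weight g]]
      unfolding weighted_mass_def[abs_def] by simp
    show "((\<lambda>r. r * radial_weight n r) \<longlongrightarrow> 0) (at_right 0)"
      using tendsto_at_right_0_if_continuous_on[of "\<lambda>r. r * radial_weight n r"]
      by (simp add: continuous_on_mult continuous_on_radial_weight)
    show "\<forall>\<^sub>F r in at_right 0. r * radial_weight n r \<noteq> 0"
      "\<forall>\<^sub>F r in at_right 0. radial_weight n r * (r + real n) \<noteq> 0"
      "\<forall>\<^sub>F r in at_right 0. (weighted_mass n g has_real_derivative radial_weight n r * g r) (at r)"
      "\<forall>\<^sub>F r in at_right 0. ((\<lambda>r. r * radial_weight n r) has_real_derivative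
          radial_weight n r * (r + real n)) (at r)"
      using pos by (eventually_elim,
          auto intro!: weighted_mass_has_real_derivative weight_deriv g
          dest: radial_weight_pos[of _ n])+
    have "((\<lambda>r. g r / (r + real n)) \<longlongrightarrow> g 0 / (0 + real n)) (at_right 0)"
      using n by (intro tendsto_intros tendsto_at_right_0_if_continuous_on g) simp
    then have "((\<lambda>r. g r / (r + real n)) \<longlongrightarrow> g 0 / real n) (at_right 0)"
      by simp
    then show "((\<lambda>r. radial_weight n r * g r / (radial_weight n r * (r + real n)))
        \<longlongrightarrow> g 0 / real n) (at_right 0)"
      by (rule Lim_transform_eventually) (use pos in \<open>eventually_elim, auto dest: radial_weight_pos[of _ n]\<close>)
  qed
  then show ?thesis
    by (rule Lim_transform_eventually)
      (use pos in \<open>eventually_elim, simp add: slope_quotient_def radial_slope_def\<close>)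
qed

lemma continuous_on_slope_quotient:
  assumes n: "n \<ge> 1" and g: "continuous_on {0..} g" "\<And>s. s \<ge> 0 \<Longrightarrow> g s \<ge> 0"
  shows "continuous_on {0..} (slope_quotient n g)"
  unfolding continuous_on_eq_continuous_within
proof
  fix x :: real assume x: "x \<in> {0..}"
  show "continuous (at x within {0..}) (slope_quotient n g)"
  proof (cases "x = 0")
    case True
    have "at (0::real) within {0..} = at_right 0"
      by (rule at_within_nhd[where S=UNIV]) auto
    then show ?thesis
      using True slope_quotient_tendsto_0[OF n g(1)] by (simp add: continuous_within slope_quotient_def)
  next
    case False
    then have x: "x > 0" using x by simp
    have "isCont (radial_slope n g) x"
      using x by (intro continuous_on_interior[OF continuous_on_radial_slope[OF n g]]) auto
    then have "isCont (\<lambda>r. radial_slope n g r / r) x"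
      using x by (intro continuous_intros) auto
    moreover have "\<forall>\<^sub>F r in nhds x. r > 0"
      using eventually_nhds_in_open[of "{0<..}" x] x by simp
    then have "\<forall>\<^sub>F r in nhds x. radial_slope n g r / r = slope_quotient n g r"
      by eventually_elim (simp add: slope_quotient_def)
    ultimately show ?thesis
      by (simp add: isCont_cong continuous_at_imp_continuous_within)
  qed
qed

lemma slope_quotient_has_real_derivative:
  assumes n: "n \<ge> 1" and g: "continuous_on {0..} g" and r: "r > 0"
  shows "(slope_quotient n g has_real_derivative
      (g r - real n * slope_quotient n g r - r * slope_quotient n g r) / r) (at r)"
proof -
  have "((\<lambda>r. radial_slope n g r / r) has_real_derivative
      ((g r - radial_slope n g r * (1 + (real n - 1) / r)) * r - radial_slope n g r * 1) / (r * r))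
      (at r)"
    using r by (intro DERIV_divide radial_slope_has_real_derivative n g DERIV_ident) auto
  then have "((\<lambda>r. radial_slope n g r / r) has_real_derivative
      (g r - real n * slope_quotient n g r - r * slope_quotient n g r) / r) (at r)"
    by (rule DERIV_cong) (use r in \<open>simp add: slope_quotient_def field_simps\<close>)
  then show ?thesis
    by (rule has_field_derivative_transform_within_open[where S="{0<..}"])
      (use r in \<open>auto simp: slope_quotient_def\<close>)
qed

lemma slope_quotient_nonneg:
  assumes "continuous_on {0..} g" "\<And>s. s \<ge> 0 \<Longrightarrow> g s \<ge> 0" "r \<ge> 0"
  shows "slope_quotient n g r \<ge> 0"
  using radial_slope_nonneg[OF assms] assms by (simp add: slope_quotient_def)

section \<open>Radial functions as classical solutions\<close>

lemma filterlim_norm_at_right_0: "filterlim norm (at_right 0) (at (0::'a::real_normed_vector))"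
  unfolding filterlim_at
proof
  show "\<forall>\<^sub>F x in at (0::'a). norm x \<in> {0<..} \<and> norm x \<noteq> 0"
    unfolding eventually_at_filter by (rule always_eventually) auto
  show "(norm \<longlongrightarrow> 0) (at (0::'a))"
    using tendsto_norm[OF tendsto_ident_at[of "0::'a" UNIV]] by simp
qed

lemma isCont_radial:
  fixes u :: "real \<Rightarrow> 'b::topological_space"
  shows "continuous_on {0..} u \<Longrightarrow> isCont (\<lambda>x::'a::real_normed_vector. u (norm x)) x"
  by (rule continuous_on_interior[where S=UNIV], rule continuous_on_compose2)
    (auto intro: continuous_on_norm_id)

lemma has_derivative_radial:
  fixes v q :: "real \<Rightarrow> real" and x :: "'a::real_inner"
  assumes v': "\<And>r. r > 0 \<Longrightarrow> (v has_real_derivative r * q r) (at r)"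
    and v: "continuous_on {0..} v" and q: "continuous_on {0..} q"
  shows "((\<lambda>x. v (norm x)) has_derivative (\<lambda>h. (q (norm x) *\<^sub>R x) \<bullet> h)) (at x)"
proof (cases "x = 0")
  case False
  have "((\<lambda>y. v (norm y)) has_derivative (\<lambda>h. (norm x * q (norm x)) * (h \<bullet> sgn x))) (at x)"
    using False
    by (intro has_derivative_compose[OF has_derivative_norm] v'[unfolded has_field_derivative_def]) auto
  moreover have "(\<lambda>h. (norm x * q (norm x)) * (h \<bullet> sgn x)) = (\<lambda>h. (q (norm x) *\<^sub>R x) \<bullet> h)"
    using False by (auto simp: sgn_div_norm inner_commute)
  ultimately show ?thesis by simp
next
  case True
  have pos: "\<forall>\<^sub>F r in at_right 0. (0::real) < r"
    by (simp add: eventually_at_right_less)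
  have "((\<lambda>r. (v r - v 0) / r) \<longlongrightarrow> 0) (at_right 0)"
  proof (rule lhopital_right_0)
    show "((\<lambda>r. v r - v 0) \<longlongrightarrow> 0) (at_right 0)"
      using tendsto_diff[OF tendsto_at_right_0_if_continuous_on[OF v] tendsto_const[of "v 0"]] by simp
    show "((\<lambda>r::real. r) \<longlongrightarrow> 0) (at_right 0)" by (rule tendsto_ident_at)
    show "\<forall>\<^sub>F r in at_right 0. (r::real) \<noteq> 0" "\<forall>\<^sub>F r in at_right 0. (1::real) \<noteq> 0"
      "\<forall>\<^sub>F r in at_right 0. ((\<lambda>r. v r - v 0) has_real_derivative r * q r) (at r)"
      "\<forall>\<^sub>F r in at_right 0. ((\<lambda>r. r) has_real_derivative 1) (at r)"
      using pos by (eventually_elim, auto intro!: derivative_eq_intros v')+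
    have "((\<lambda>r. r * q r) \<longlongrightarrow> 0 * q 0) (at_right 0)"
      by (intro tendsto_intros tendsto_at_right_0_if_continuous_on q)
    then show "((\<lambda>r. r * q r / 1) \<longlongrightarrow> 0) (at_right 0)" by simp
  qed
  then have "((\<lambda>h::'a. \<bar>(v (norm h) - v 0) / norm h\<bar>) \<longlongrightarrow> 0) (at 0)"
    by (intro tendsto_rabs_zero filterlim_compose[OF _ filterlim_norm_at_right_0])
  then show ?thesis
    unfolding True has_derivative_at by (simp add: bounded_linear_inner_right)
qed

text \<open>The derivative of the field q(|x|) x, with Z r = r q'(r).\<close>

definition radial_hessian :: "(real \<Rightarrow> real) \<Rightarrow> (real \<Rightarrow> real) \<Rightarrow> 'a \<Rightarrow> 'a \<Rightarrow> 'a::real_inner" where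
  "radial_hessian Z q x h = ((Z (norm x) / (norm x)\<^sup>2) * (x \<bullet> h)) *\<^sub>R x + q (norm x) *\<^sub>R h"

lemma has_derivative_radial_field:
  fixes q Z :: "real \<Rightarrow> real" and x :: "'a::real_inner"
  assumes q': "\<And>r. r > 0 \<Longrightarrow> (q has_real_derivative Z r / r) (at r)"
    and q: "continuous_on {0..} q"
  shows "((\<lambda>x. q (norm x) *\<^sub>R x) has_derivative radial_hessian Z q x) (at x)"
proof (cases "x = 0")
  case False
  have "((\<lambda>y. q (norm y)) has_derivative (\<lambda>h. (Z (norm x) / norm x) * (h \<bullet> sgn x))) (at x)"
    using False
    by (intro has_derivative_compose[OF has_derivative_norm] q'[unfolded has_field_derivative_def]) auto
  then have "((\<lambda>x. q (norm x) *\<^sub>R x) has_derivative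
      (\<lambda>h. q (norm x) *\<^sub>R h + ((Z (norm x) / norm x) * (h \<bullet> sgn x)) *\<^sub>R x)) (at x)"
    by (rule has_derivative_scaleR[OF _ has_derivative_ident])
  moreover have "(\<lambda>h. q (norm x) *\<^sub>R h + ((Z (norm x) / norm x) * (h \<bullet> sgn x)) *\<^sub>R x)
      = radial_hessian Z q x"
    using False by (auto simp: radial_hessian_def sgn_div_norm inner_commute power2_eq_square
        fun_eq_iff divide_inverse mult_ac)
  ultimately show ?thesis by simp
next
  case True
  have "((\<lambda>h::'a. q (norm h)) \<longlongrightarrow> q 0) (at 0)"
    using isCont_radial[OF q, of 0] by (simp add: isCont_def)
  then have "((\<lambda>h::'a. \<bar>q (norm h) - q 0\<bar>) \<longlongrightarrow> 0) (at 0)"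
    by (intro tendsto_rabs_zero) (simp add: LIM_zero)
  moreover have "\<forall>\<^sub>F h in at 0. \<bar>q (norm h) - q 0\<bar> = norm (q (norm h) *\<^sub>R h - q 0 *\<^sub>R h) / norm h"
    unfolding eventually_at_filter by (auto simp flip: scaleR_diff_left)
  ultimately have "((\<lambda>h::'a. norm (q (norm h) *\<^sub>R h - q 0 *\<^sub>R h) / norm h) \<longlongrightarrow> 0) (at 0)"
    by (rule Lim_transform_eventually)
  moreover have H0: "radial_hessian Z q 0 = (\<lambda>h. q 0 *\<^sub>R h)"
    by (simp add: radial_hessian_def fun_eq_iff)
  ultimately show ?thesis
    unfolding True H0 has_derivative_at by (simp add: bounded_linear_scaleR_right)
qed

lemma continuous_on_radial_hessian:
  fixes b :: "'a::real_inner"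
  assumes Z: "continuous_on {0..} Z" "Z 0 = 0" and q: "continuous_on {0..} q"
  shows "continuous_on UNIV (\<lambda>x. radial_hessian Z q x b)"
proof (rule continuous_at_imp_continuous_on, intro ballI)
  fix x :: 'a
  show "isCont (\<lambda>x. radial_hessian Z q x b) x"
  proof (cases "x = 0")
    case False
    then show ?thesis unfolding radial_hessian_def
      by (intro continuous_intros isCont_radial Z q) auto
  next
    case True
    txt \<open>The first term is bounded by |Z(|x|)| |b| and Z(0) = 0.\<close>
    have "((\<lambda>x::'a. ((Z (norm x) / (norm x)\<^sup>2) * (x \<bullet> b)) *\<^sub>R x) \<longlongrightarrow> 0) (at 0)"
    proof (rule Lim_null_comparison)
      show "\<forall>\<^sub>F x in at 0. norm (((Z (norm x) / (norm x)\<^sup>2) * (x \<bullet> b)) *\<^sub>R x) \<le> \<bar>Z (norm x)\<bar> * norm b"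
      proof (rule always_eventually, intro allI)
        fix x :: 'a
        have "norm (((Z (norm x) / (norm x)\<^sup>2) * (x \<bullet> b)) *\<^sub>R x)
            = \<bar>Z (norm x)\<bar> / (norm x)\<^sup>2 * \<bar>x \<bullet> b\<bar> * norm x"
          by (simp add: abs_mult)
        also have "\<dots> \<le> \<bar>Z (norm x)\<bar> / (norm x)\<^sup>2 * (norm x * norm b) * norm x"
          by (intro mult_right_mono mult_left_mono Cauchy_Schwarz_ineq2) auto
        also have "\<dots> \<le> \<bar>Z (norm x)\<bar> * norm b"
          by (cases "x = 0") (auto simp: power2_eq_square)
        finally show "norm (((Z (norm x) / (norm x)\<^sup>2) * (x \<bullet> b)) *\<^sub>R x) \<le> \<bar>Z (norm x)\<bar> * norm b" .
      qed
      have "((\<lambda>x::'a. Z (norm x)) \<longlongrightarrow> Z 0) (at 0)"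
        using isCont_radial[OF Z(1), of 0] by (simp add: isCont_def)
      then show "((\<lambda>x::'a. \<bar>Z (norm x)\<bar> * norm b) \<longlongrightarrow> 0) (at 0)"
        using Z(2) by (auto intro!: tendsto_eq_intros)
    qed
    moreover have "((\<lambda>x::'a. q (norm x) *\<^sub>R b) \<longlongrightarrow> q 0 *\<^sub>R b) (at 0)"
      using isCont_radial[OF q, of 0] by (intro tendsto_intros) (simp add: isCont_def)
    ultimately have "((\<lambda>x. radial_hessian Z q x b) \<longlongrightarrow> 0 + q 0 *\<^sub>R b) (at 0)"
      unfolding radial_hessian_def by (rule tendsto_add)
    then show ?thesis using True by (simp add: isCont_def radial_hessian_def)
  qed
qed

lemma trace_radial_hessian:
  fixes x :: "'a::euclidean_space"
  assumes "Z 0 = 0"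
  shows "(\<Sum>b\<in>Basis. radial_hessian Z q x b \<bullet> b) = Z (norm x) + real DIM('a) * q (norm x)"
proof -
  have "(\<Sum>b\<in>Basis. radial_hessian Z q x b \<bullet> b)
      = (\<Sum>b\<in>Basis. (Z (norm x) / (norm x)\<^sup>2) * ((x \<bullet> b) * (x \<bullet> b)) + q (norm x))"
    unfolding radial_hessian_def by (intro sum.cong refl) (simp add: algebra_simps)
  also have "\<dots> = (Z (norm x) / (norm x)\<^sup>2) * (x \<bullet> x) + real DIM('a) * q (norm x)"
    by (simp add: sum.distrib sum_distrib_left euclidean_inner[of x x])
  also have "(Z (norm x) / (norm x)\<^sup>2) * (x \<bullet> x) = Z (norm x)"
    using assms by (cases "x = 0") (auto simp: power2_norm_eq_inner[symmetric])
  finally show ?thesis .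
qed

lemma entire_classical_solution_radial:
  fixes g v P F :: "real \<Rightarrow> real"
  assumes n: "n = DIM('a::euclidean_space)"
    and g: "continuous_on {0..} g" "\<And>s. s \<ge> 0 \<Longrightarrow> g s \<ge> 0"
    and v: "\<And>r. r \<ge> 0 \<Longrightarrow> v r = c + integral {0..r} (radial_slope n g)"
    and eq: "\<And>r. r \<ge> 0 \<Longrightarrow> g r = P r * F (v r)"
  shows "entire_classical_solution P F (\<lambda>x::'a. v (norm x))"
proof -
  have n1: "n \<ge> 1" using n by (simp add: Suc_leI)
  define q where "q = slope_quotient n g"
  define Z where "Z r = g r - real n * q r - r * q r" for r
  have q: "continuous_on {0..} q"
    unfolding q_def by (rule continuous_on_slope_quotient[OF n1 g])
  have Z: "continuous_on {0..} Z" "Z 0 = 0"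
  proof -
    show "continuous_on {0..} Z" unfolding Z_def[abs_def] by (intro continuous_intros g(1) q)
    show "Z 0 = 0" using n1 by (simp add: Z_def q_def slope_quotient_def)
  qed
  have "continuous_on {0..} (\<lambda>r. c + integral {0..r} (radial_slope n g))"
    by (intro continuous_on_add continuous_on_const continuous_on_integral_atLeast_0
        continuous_on_radial_slope n1 g)
  then have v_cont: "continuous_on {0..} v"
    by (rule continuous_on_eq) (simp add: v)
  have v': "(v has_real_derivative r * q r) (at r)" if r: "r > 0" for r
  proof -
    have "((\<lambda>r. c + integral {0..r} (radial_slope n g)) has_real_derivative radial_slope n g r) (at r)"
      by (auto intro!: derivative_eq_intros integral_has_real_derivative_at
          continuous_on_radial_slope n1 g r)
    then have "(v has_real_derivative radial_slope n g r) (at r)"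
      by (rule has_field_derivative_transform_within_open[where S="{0<..}"]) (use r v in auto)
    then show ?thesis using r by (simp add: q_def slope_quotient_def)
  qed
  have q': "(q has_real_derivative Z r / r) (at r)" if "r > 0" for r
    unfolding q_def Z_def by (rule slope_quotient_has_real_derivative[OF n1 g(1) that])
  have "(\<Sum>b\<in>Basis. radial_hessian Z q x b \<bullet> b) + norm (q (norm x) *\<^sub>R x) = P (norm x) * F (v (norm x))"
    for x :: 'a
    using slope_quotient_nonneg[OF g, of "norm x" n]
    by (simp add: trace_radial_hessian[where Z=Z, OF Z(2)] Z_def q_def eq n[symmetric] algebra_simps)
  then show ?thesis
    unfolding entire_classical_solution_def
    by (intro exI[of _ "\<lambda>x. q (norm x) *\<^sub>R x"] exI[of _ "radial_hessian Z q"] conjI allI ballI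
        has_derivative_radial[OF v' v_cont q] has_derivative_radial_field[OF q' q]
        continuous_on_radial_hessian[OF Z q])
qed

section \<open>The radial problem and its solution by monotone iteration\<close>

text \<open>The radial form of Delta u + |grad u| = P(|x|) F(u) with u(0) = a; the solution sol is the
  limit of the Picard iterates, squeezed between the subsolution a and the supersolution barrier.\<close>

locale radial_problem =
  fixes n :: nat and P F :: "real \<Rightarrow> real" and Lam a :: real
  assumes n_ge_3: "n \<ge> 3"
    and P_cont: "continuous_on {0..} P" and P_nonneg: "\<And>s. s \<ge> 0 \<Longrightarrow> P s \<ge> 0"
    and F_cont: "continuous_on {0..} F" and F_mono: "mono_on {0..} F"
    and F_nonneg: "\<And>s. s \<ge> 0 \<Longrightarrow> F s \<ge> 0"
    and F_le_linear: "\<And>s. s \<ge> 1 \<Longrightarrow> F s \<le> Lam * s"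
    and a_ge_1: "a \<ge> 1"
begin

definition source :: "(real \<Rightarrow> real) \<Rightarrow> real \<Rightarrow> real" where
  "source u s = P s * F (u s)"

definition picard :: "(real \<Rightarrow> real) \<Rightarrow> real \<Rightarrow> real" where
  "picard u r = a + integral {0..r} (radial_slope n (source u))"

definition growth :: "real \<Rightarrow> real" where
  "growth r = exp (Lam / (real n - 2) * integral {0..r} (\<lambda>s. s * P s))"

definition barrier :: "real \<Rightarrow> real" where
  "barrier r = a * growth r"

definition admissible :: "(real \<Rightarrow> real) \<Rightarrow> bool" where
  "admissible u \<longleftrightarrow> continuous_on {0..} u \<and> (\<forall>r\<ge>0. a \<le> u r \<and> u r \<le> barrier r)"

lemma n_ge_1: "n \<ge> 1"
  using n_ge_3 by simp

lemma Lam_nonneg: "Lam \<ge> 0"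
  using F_le_linear[of 1] F_nonneg[of 1] by simp

lemma continuous_on_id_mult_P: "continuous_on {0..} (\<lambda>s. s * P s)"
  by (intro continuous_intros P_cont)

lemma growth_ge_1:
  assumes "r \<ge> 0"
  shows "growth r \<ge> 1"
proof -
  have "integral {0..r} (\<lambda>s. s * P s) \<ge> 0"
    using P_nonneg by (intro integral_nonneg integrable_on_atLeastAtMost_0 continuous_on_id_mult_P) auto
  then show ?thesis
    unfolding growth_def using Lam_nonneg n_ge_3 by simp
qed

lemma continuous_on_growth: "continuous_on {0..} growth"
  unfolding growth_def by (intro continuous_intros continuous_on_integral_atLeast_0 continuous_on_id_mult_P)

lemma barrier_eq_integral:
  assumes r: "r \<ge> 0"
  shows "barrier r = a + integral {0..r} (\<lambda>s. Lam / (real n - 2) * (s * P s * barrier s))"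
proof -
  have "((\<lambda>s. Lam / (real n - 2) * (s * P s * barrier s)) has_integral (barrier r - barrier 0)) {0..r}"
  proof (rule fundamental_theorem_of_calculus[OF r])
    fix x assume x: "x \<in> {0..r}"
    have "((\<lambda>u. integral {0..u} (\<lambda>s. s * P s)) has_real_derivative x * P x) (at x within {0..r})"
      using x by (intro integral_has_real_derivative continuous_on_subset[OF continuous_on_id_mult_P]) auto
    then have "(barrier has_real_derivative barrier x * (Lam / (real n - 2) * (x * P x)))
        (at x within {0..r})"
      unfolding barrier_def[abs_def] growth_def using n_ge_3
      by (auto intro!: derivative_eq_intros simp: barrier_def growth_def)
    then show "(barrier has_vector_derivative Lam / (real n - 2) * (x * P x * barrier x))
        (at x within {0..r})"
      by (simp add: has_real_derivative_iff_has_vector_derivative mult_ac)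
  qed
  then have "integral {0..r} (\<lambda>s. Lam / (real n - 2) * (s * P s * barrier s)) = barrier r - barrier 0"
    by (rule integral_unique)
  moreover have "barrier 0 = a" by (simp add: barrier_def growth_def)
  ultimately show ?thesis by simp
qed

lemma admissibleD:
  assumes "admissible u"
  shows "continuous_on {0..} u" "\<And>r. r \<ge> 0 \<Longrightarrow> a \<le> u r" "\<And>r. r \<ge> 0 \<Longrightarrow> u r \<le> barrier r"
    "\<And>r. r \<ge> 0 \<Longrightarrow> u r \<ge> 0"
  using assms a_ge_1 unfolding admissible_def by (auto intro: order_trans[OF zero_le_one])

lemma admissible_barrier: "admissible barrier"
proof -
  have "continuous_on {0..} barrier"
    unfolding barrier_def[abs_def] by (intro continuous_intros continuous_on_growth)
  moreover have "a \<le> barrier r" if "r \<ge> 0" for r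
    using growth_ge_1[OF that] a_ge_1 unfolding barrier_def
    by (metis mult.right_neutral mult_left_mono order_trans zero_le_one)
  ultimately show ?thesis unfolding admissible_def by simp
qed

lemma continuous_on_source:
  assumes "admissible u"
  shows "continuous_on {0..} (source u)"
proof -
  have "continuous_on {0..} (\<lambda>s. F (u s))"
    using admissibleD[OF assms] by (intro continuous_on_compose2[OF F_cont]) auto
  then show ?thesis unfolding source_def[abs_def] by (intro continuous_intros P_cont)
qed

lemma source_nonneg: "admissible u \<Longrightarrow> s \<ge> 0 \<Longrightarrow> source u s \<ge> 0"
  unfolding source_def using admissibleD(4) by (intro mult_nonneg_nonneg P_nonneg F_nonneg)

lemma source_mono:
  assumes "admissible u" "admissible w" "\<And>r. r \<ge> 0 \<Longrightarrow> u r \<le> w r" "s \<ge> 0"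
  shows "source u s \<le> source w s"
  unfolding source_def using assms admissibleD(4)[OF assms(1)] admissibleD(4)[OF assms(2)]
  by (intro mult_left_mono P_nonneg mono_onD[OF F_mono]) auto

lemma continuous_on_slope_source:
  "admissible u \<Longrightarrow> continuous_on {0..} (radial_slope n (source u))"
  by (intro continuous_on_radial_slope n_ge_1 continuous_on_source source_nonneg)

lemma picard_le_barrier:
  assumes u: "admissible u" and r: "r \<ge> 0"
  shows "picard u r \<le> barrier r"
proof -
  have "integral {0..r} (radial_slope n (source u)) \<le> integral {0..r} (\<lambda>s. s * source u s) / (real n - 2)"
    by (rule integral_radial_slope_le[OF n_ge_3 continuous_on_source[OF u] source_nonneg[OF u] r])
  also have "integral {0..r} (\<lambda>s. s * source u s) \<le> integral {0..r} (\<lambda>s. Lam * (s * P s * barrier s))"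
  proof (rule integral_le)
    show "(\<lambda>s. s * source u s) integrable_on {0..r}"
      by (intro integrable_on_atLeastAtMost_0 continuous_intros continuous_on_source u)
    show "(\<lambda>s. Lam * (s * P s * barrier s)) integrable_on {0..r}"
      by (intro integrable_on_atLeastAtMost_0 continuous_intros P_cont admissibleD(1) admissible_barrier)
    fix s assume "s \<in> {0..r}"
    then have s: "s \<ge> 0" by simp
    have "F (u s) \<le> Lam * u s" using F_le_linear admissibleD(2)[OF u s] a_ge_1 by simp
    also have "\<dots> \<le> Lam * barrier s" using admissibleD(3)[OF u s] Lam_nonneg by (rule mult_left_mono)
    finally have "s * P s * F (u s) \<le> s * P s * (Lam * barrier s)"
      using s P_nonneg[OF s] by (intro mult_left_mono) auto
    then show "s * source u s \<le> Lam * (s * P s * barrier s)"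
      unfolding source_def by (simp add: mult_ac)
  qed
  then have "integral {0..r} (\<lambda>s. s * source u s) / (real n - 2)
      \<le> integral {0..r} (\<lambda>s. Lam * (s * P s * barrier s)) / (real n - 2)"
    using n_ge_3 by (intro divide_right_mono) auto
  also have "\<dots> = barrier r - a"
    using barrier_eq_integral[OF r] by simp
  finally show ?thesis unfolding picard_def by simp
qed


lemma admissible_picard:
  assumes u: "admissible u"
  shows "admissible (picard u)"
proof -
  have "continuous_on {0..} (picard u)"
    unfolding picard_def[abs_def]
    by (intro continuous_intros continuous_on_integral_atLeast_0 continuous_on_slope_source u)
  moreover have "a \<le> picard u r" if r: "r \<ge> 0" for r
  proof -
    have "integral {0..r} (radial_slope n (source u)) \<ge> 0"
      using u by (intro integral_nonneg integrable_on_atLeastAtMost_0 continuous_on_slope_source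
          radial_slope_nonneg continuous_on_source source_nonneg) auto
    then show ?thesis unfolding picard_def by simp
  qed
  ultimately show ?thesis
    unfolding admissible_def using picard_le_barrier[OF u] by simp
qed

lemma picard_mono:
  assumes u: "admissible u" and w: "admissible w" and le: "\<And>r. r \<ge> 0 \<Longrightarrow> u r \<le> w r"
    and r: "r \<ge> 0"
  shows "picard u r \<le> picard w r"
proof -
  have "integral {0..r} (radial_slope n (source u)) \<le> integral {0..r} (radial_slope n (source w))"
  proof (rule integral_le)
    fix t assume "t \<in> {0..r}"
    then show "radial_slope n (source u) t \<le> radial_slope n (source w) t"
      by (intro radial_slope_mono continuous_on_source source_mono u w le) auto
  qed (intro integrable_on_atLeastAtMost_0 continuous_on_slope_source u w)+
  then show ?thesis unfolding picard_def by simp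
qed

definition iterate :: "nat \<Rightarrow> real \<Rightarrow> real" where
  "iterate k = (picard ^^ k) (\<lambda>_. a)"

definition sol :: "real \<Rightarrow> real" where
  "sol r = (SUP k. iterate k r)"

lemma iterate_0: "iterate 0 = (\<lambda>_. a)"
  by (simp add: iterate_def)

lemma iterate_Suc: "iterate (Suc k) = picard (iterate k)"
  by (simp add: iterate_def)

lemma admissible_iterate: "admissible (iterate k)"
proof (induction k)
  case 0
  show ?case
    unfolding iterate_0 admissible_def using admissibleD(2,3)[OF admissible_barrier]
    by (auto intro: order_trans)
qed (simp add: iterate_Suc admissible_picard)

lemma iterate_le_Suc: "r \<ge> 0 \<Longrightarrow> iterate k r \<le> iterate (Suc k) r"
proof (induction k arbitrary: r)
  case 0
  then show ?case
    using admissibleD(2)[OF admissible_iterate[of 1]] by (simp add: iterate_0)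
next
  case (Suc k)
  then show ?case
    unfolding iterate_Suc[of "Suc k"] iterate_Suc[of k]
    by (intro picard_mono admissible_iterate admissible_picard) (simp_all add: iterate_Suc)
qed

lemma iterate_tendsto_sol: "r \<ge> 0 \<Longrightarrow> (\<lambda>k. iterate k r) \<longlonglongrightarrow> sol r"
  unfolding sol_def using admissibleD(3)[OF admissible_iterate] iterate_le_Suc
  by (intro LIMSEQ_incseq_SUP bdd_aboveI2 incseq_SucI) auto

lemma sol_ge: "r \<ge> 0 \<Longrightarrow> a \<le> sol r"
  using LIMSEQ_le_const[OF iterate_tendsto_sol] admissibleD(2)[OF admissible_iterate] by blast

lemma sol_pos: "r \<ge> 0 \<Longrightarrow> sol r > 0"
  using sol_ge a_ge_1 by (meson less_le_trans zero_less_one)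

lemma sol_le_barrier: "r \<ge> 0 \<Longrightarrow> sol r \<le> barrier r"
  using LIMSEQ_le_const2[OF iterate_tendsto_sol] admissibleD(3)[OF admissible_iterate] by blast

lemma source_iterate_le_barrier: "s \<ge> 0 \<Longrightarrow> source (iterate k) s \<le> source barrier s"
  by (intro source_mono admissible_iterate admissible_barrier admissibleD(3))

lemma source_iterate_tendsto:
  assumes s: "s \<ge> 0"
  shows "(\<lambda>k. source (iterate k) s) \<longlonglongrightarrow> source sol s"
proof -
  have "sol s \<ge> 0" using sol_ge[OF s] a_ge_1 by linarith
  then show ?thesis
    unfolding source_def using admissibleD(4)[OF admissible_iterate s]
    by (intro tendsto_mult_left continuous_on_tendsto_compose[OF F_cont iterate_tendsto_sol[OF s]]) auto
qed

lemma radial_slope_source_iterate_tendsto: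
  assumes t: "t \<ge> 0"
  shows "(\<lambda>k. radial_slope n (source (iterate k)) t) \<longlonglongrightarrow> radial_slope n (source sol) t"
proof -
  have "(\<lambda>k. integral {0..t} (\<lambda>s. radial_weight n s * source (iterate k) s))
      \<longlonglongrightarrow> integral {0..t} (\<lambda>s. radial_weight n s * source sol s)"
  proof (rule dominated_convergence(2))
    show "(\<lambda>s. radial_weight n s * source (iterate k) s) integrable_on {0..t}" for k
      by (intro integrable_on_atLeastAtMost_0 continuous_intros continuous_on_source admissible_iterate)
    show "(\<lambda>s. radial_weight n s * source barrier s) integrable_on {0..t}"
      by (intro integrable_on_atLeastAtMost_0 continuous_intros continuous_on_source admissible_barrier)
    fix k s assume "s \<in> {0..t}"
    then have s: "s \<ge> 0" by simp
    show "norm (radial_weight n s * source (iterate k) s) \<le> radial_weight n s * source barrier s"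
      using source_nonneg[OF admissible_iterate s] radial_weight_nonneg[OF s]
      by (simp add: abs_mult mult_left_mono source_iterate_le_barrier[OF s])
    show "(\<lambda>k. radial_weight n s * source (iterate k) s) \<longlonglongrightarrow> radial_weight n s * source sol s"
      by (intro tendsto_mult_left source_iterate_tendsto s)
  qed
  then show ?thesis
    unfolding radial_slope_def weighted_mass_def divide_inverse by (rule tendsto_mult_right)
qed

lemma integral_radial_slope_source_iterate_tendsto:
  assumes r: "r \<ge> 0"
  shows "radial_slope n (source sol) integrable_on {0..r}"
    "(\<lambda>k. integral {0..r} (radial_slope n (source (iterate k))))
      \<longlonglongrightarrow> integral {0..r} (radial_slope n (source sol))"
proof -
  have bound: "norm (radial_slope n (source (iterate k)) t) \<le> radial_slope n (source barrier) t"
    if "t \<in> {0..r}" for k t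
  proof -
    have "0 \<le> radial_slope n (source (iterate k)) t"
      using that by (intro radial_slope_nonneg continuous_on_source source_nonneg admissible_iterate) auto
    moreover have "radial_slope n (source (iterate k)) t \<le> radial_slope n (source barrier) t"
      using that by (intro radial_slope_mono continuous_on_source admissible_iterate
          admissible_barrier source_iterate_le_barrier) auto
    ultimately show ?thesis by simp
  qed
  have conv: "(\<lambda>k. radial_slope n (source (iterate k)) t) \<longlonglongrightarrow> radial_slope n (source sol) t"
    if "t \<in> {0..r}" for t
    using that by (intro radial_slope_source_iterate_tendsto) simp
  note dc = dominated_convergence[OF
      integrable_on_atLeastAtMost_0[OF continuous_on_slope_source[OF admissible_iterate]]
      integrable_on_atLeastAtMost_0[OF continuous_on_slope_source[OF admissible_barrier]]
      bound conv]
  show "radial_slope n (source sol) integrable_on {0..r}" by (rule dc(1))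
  show "(\<lambda>k. integral {0..r} (radial_slope n (source (iterate k))))
      \<longlonglongrightarrow> integral {0..r} (radial_slope n (source sol))" by (rule dc(2))
qed

lemma sol_eq: "r \<ge> 0 \<Longrightarrow> sol r = a + integral {0..r} (radial_slope n (source sol))"
  using LIMSEQ_unique[OF LIMSEQ_Suc[OF iterate_tendsto_sol]]
    tendsto_add[OF tendsto_const integral_radial_slope_source_iterate_tendsto(2)]
  by (simp add: iterate_Suc picard_def)

lemma admissible_sol: "admissible sol"
proof -
  have "continuous_on {0..R} sol" if "R > 0" for R
  proof -
    have "continuous_on {0..R} (\<lambda>r. a + integral {0..r} (radial_slope n (source sol)))"
      using that
      by (intro continuous_intros indefinite_integral_continuous_1
          integral_radial_slope_source_iterate_tendsto(1)) simp
    then show ?thesis by (rule continuous_on_eq) (simp add: sol_eq)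
  qed
  then show ?thesis
    unfolding admissible_def using sol_ge sol_le_barrier
    by (simp add: continuous_on_atLeast_0I)
qed


lemma entire_classical_solution_sol:
  assumes "n = DIM('a::euclidean_space)"
  shows "entire_classical_solution P F (\<lambda>x::'a. sol (norm x))"
  by (rule entire_classical_solution_radial[OF assms continuous_on_source source_nonneg sol_eq])
    (simp_all add: admissible_sol source_def)

lemma large_radial_sol:
  assumes Q: "continuous_on {0..} Q" "\<And>s. s \<ge> 0 \<Longrightarrow> 0 \<le> Q s \<and> Q s \<le> P s"
    and diverges: "filterlim (\<lambda>T. integral {1..T} (radial_slope n Q)) at_top at_top"
    and Fa: "F a > 0"
  shows "large (\<lambda>x::'a::real_normed_vector. sol (norm x))"
proof -
  have lower: "a + F a * integral {1..r} (radial_slope n Q) \<le> sol r" if r: "r \<ge> 1" for r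
  proof -
    have slope_le: "F a * radial_slope n Q t \<le> radial_slope n (source sol) t" if "t \<ge> 0" for t
    proof -
      have "F a * Q s \<le> source sol s" if s: "s \<ge> 0" for s
      proof -
        have "F a \<le> F (sol s)"
          using a_ge_1 sol_ge[OF s] by (intro mono_onD[OF F_mono]) auto
        then have "F a * Q s \<le> F (sol s) * P s"
          using Q(2)[OF s] Fa by (intro mult_mono) auto
        then show ?thesis unfolding source_def by (simp add: mult.commute)
      qed
      then have "radial_slope n (\<lambda>s. F a * Q s) t \<le> radial_slope n (source sol) t"
        using that by (intro radial_slope_mono continuous_intros Q(1) continuous_on_source
            admissible_sol) auto
      then show ?thesis by (simp add: radial_slope_cmult)
    qed
    have "F a * integral {1..r} (radial_slope n Q) \<le> integral {1..r} (radial_slope n (source sol))"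
      unfolding integral_mult_right[symmetric] using slope_le Q(2)
      by (intro integral_le integrable_continuous_real continuous_intros
          continuous_on_subset[OF continuous_on_radial_slope[OF n_ge_1 Q(1)]]
          continuous_on_subset[OF continuous_on_slope_source[OF admissible_sol]]) auto
    also have "\<dots> \<le> integral {0..r} (radial_slope n (source sol))"
      using continuous_on_slope_source[OF admissible_sol]
        radial_slope_nonneg[OF continuous_on_source[OF admissible_sol] source_nonneg[OF admissible_sol]]
      by (intro integral_subset_le integrable_continuous_real) (auto elim: continuous_on_subset)
    finally show ?thesis using sol_eq[of r] r by simp
  qed
  have "filterlim (\<lambda>r. a + F a * integral {1..r} (radial_slope n Q)) at_top at_top"
    by (intro filterlim_tendsto_add_at_top[OF tendsto_const]
        filterlim_tendsto_pos_mult_at_top[OF tendsto_const Fa diverges])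
  moreover have "\<forall>\<^sub>F r in at_top. a + F a * integral {1..r} (radial_slope n Q) \<le> sol r"
    using eventually_ge_at_top[of "1::real"] by eventually_elim (rule lower)
  ultimately have "filterlim sol at_top at_top" by (rule filterlim_at_top_mono)
  then show ?thesis unfolding large_def by (rule filterlim_compose[OF _ filterlim_norm_at_top])
qed

end

section \<open>Comparison of two radial problems\<close>

locale radial_pair =
  lower: radial_problem n P F Lam a + upper: radial_problem n Q F Lam b
  for n P Q F Lam a b +
  assumes Q_le_P: "\<And>s. s \<ge> 0 \<Longrightarrow> Q s \<le> P s"
begin

definition excess :: "real \<Rightarrow> real" where
  "excess s = (P s - Q s) * F (lower.sol s)"

lemma continuous_on_excess: "continuous_on {0..} excess"
  unfolding excess_def[abs_def] using lower.admissibleD(4)[OF lower.admissible_sol]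
  by (intro continuous_intros lower.P_cont upper.P_cont
      continuous_on_compose2[OF lower.F_cont lower.admissibleD(1)[OF lower.admissible_sol]]) auto

lemma excess_nonneg: "s \<ge> 0 \<Longrightarrow> excess s \<ge> 0"
  unfolding excess_def using Q_le_P lower.admissibleD(4)[OF lower.admissible_sol]
  by (intro mult_nonneg_nonneg lower.F_nonneg) auto

lemma source_le_source_plus_excess:
  assumes le: "lower.sol s \<le> upper.sol s" and s: "s \<ge> 0"
  shows "lower.source lower.sol s \<le> upper.source upper.sol s + excess s"
proof -
  have "0 \<le> lower.sol s" "0 \<le> upper.sol s"
    using s lower.admissibleD(4)[OF lower.admissible_sol] upper.admissibleD(4)[OF upper.admissible_sol]
    by auto
  then have "F (lower.sol s) \<le> F (upper.sol s)"
    using le by (intro mono_onD[OF lower.F_mono]) auto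
  then have "Q s * F (lower.sol s) \<le> Q s * F (upper.sol s)"
    using s upper.P_nonneg[of s] by (intro mult_left_mono) auto
  then show ?thesis
    unfolding lower.source_def upper.source_def excess_def left_diff_distrib by linarith
qed

lemma integral_lower_slope_le:
  assumes le: "\<And>s. s \<in> {0..r} \<Longrightarrow> lower.sol s \<le> upper.sol s" and r: "r \<ge> 0"
  shows "integral {0..r} (radial_slope n (lower.source lower.sol))
    \<le> integral {0..r} (radial_slope n (upper.source upper.sol))
      + integral {0..r} (\<lambda>s. s * excess s) / (real n - 2)"
proof -
  note lower_cont = lower.continuous_on_source[OF lower.admissible_sol]
  note upper_cont = upper.continuous_on_source[OF upper.admissible_sol]
  have "radial_slope n (lower.source lower.sol) t
      \<le> radial_slope n (upper.source upper.sol) t + radial_slope n excess t" if "t \<in> {0..r}" for t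
  proof -
    have "radial_slope n (lower.source lower.sol) t
        \<le> radial_slope n (\<lambda>s. upper.source upper.sol s + excess s) t"
      using that le by (intro radial_slope_mono lower_cont continuous_on_add upper_cont
          continuous_on_excess source_le_source_plus_excess) auto
    then show ?thesis by (simp add: radial_slope_add[OF upper_cont continuous_on_excess])
  qed
  then have "integral {0..r} (radial_slope n (lower.source lower.sol))
      \<le> integral {0..r} (\<lambda>t. radial_slope n (upper.source upper.sol) t + radial_slope n excess t)"
    by (intro integral_le integrable_on_atLeastAtMost_0 continuous_intros
        continuous_on_radial_slope lower.n_ge_1 lower_cont upper_cont continuous_on_excess
        excess_nonneg lower.source_nonneg upper.source_nonneg lower.admissible_sol
        upper.admissible_sol)
  also have "\<dots> = integral {0..r} (radial_slope n (upper.source upper.sol))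
      + integral {0..r} (radial_slope n excess)"
    by (intro integral_add integrable_on_atLeastAtMost_0 continuous_on_radial_slope lower.n_ge_1
        upper_cont continuous_on_excess excess_nonneg upper.source_nonneg upper.admissible_sol)
  also have "integral {0..r} (radial_slope n excess) \<le> integral {0..r} (\<lambda>s. s * excess s) / (real n - 2)"
    by (rule integral_radial_slope_le[OF lower.n_ge_3 continuous_on_excess excess_nonneg r])
  finally show ?thesis by simp
qed

text \<open>Continuation: as long as v \<le> w on [0, r], the excess weight lowers w(r) - v(r) by at
  most c.\<close>

lemma lower_sol_le_upper_sol_if_gap:
  assumes gap: "\<And>r. r \<ge> 0 \<Longrightarrow> integral {0..r} (\<lambda>s. s * excess s) \<le> (real n - 2) * c"
    and ab: "a + c < b" and r: "r \<ge> 0"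
  shows "lower.sol r \<le> upper.sol r"
proof -
  define D where "D r = upper.sol r - lower.sol r" for r
  have "c \<ge> 0" using gap[of 0] lower.n_ge_3 by (simp add: zero_le_mult_iff)
  have "D r \<ge> 0"
  proof (rule nonneg_by_continuation[OF _ _ _ r])
    show "continuous_on {0..} D"
      unfolding D_def[abs_def]
      by (intro continuous_intros lower.admissibleD(1) upper.admissibleD(1) lower.admissible_sol
          upper.admissible_sol)
    show "D 0 > 0" using lower.sol_eq[of 0] upper.sol_eq[of 0] ab \<open>c \<ge> 0\<close> by (simp add: D_def)
  next
    fix r :: real assume r: "r \<ge> 0" and D: "\<And>s. s \<in> {0..r} \<Longrightarrow> D s \<ge> 0"
    have "integral {0..r} (radial_slope n (lower.source lower.sol))
        \<le> integral {0..r} (radial_slope n (upper.source upper.sol))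
          + integral {0..r} (\<lambda>s. s * excess s) / (real n - 2)"
      using D by (intro integral_lower_slope_le r) (simp add: D_def)
    moreover have "integral {0..r} (\<lambda>s. s * excess s) / (real n - 2) \<le> c"
      using gap[OF r] lower.n_ge_3 by (simp add: divide_le_eq mult.commute)
    ultimately show "D r > 0"
      using lower.sol_eq[OF r] upper.sol_eq[OF r] ab by (simp add: D_def)
  qed
  then show ?thesis by (simp add: D_def)
qed

lemma integral_weighted_gap_le:
  assumes int: "(\<lambda>r. r * (P r - Q r) * upper.growth r) integrable_on {0..}" and r: "r \<ge> 0"
  shows "integral {0..r} (\<lambda>s. s * (P s - Q s)) \<le> integral {0..} (\<lambda>r. r * (P r - Q r) * upper.growth r)"
proof -
  have nonneg: "s * (P s - Q s) \<ge> 0" if "s \<ge> 0" for s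
    using that Q_le_P[OF that] by simp
  have le_growth: "s * (P s - Q s) \<le> s * (P s - Q s) * upper.growth s" if "s \<ge> 0" for s
    using mult_left_mono[OF upper.growth_ge_1 nonneg, OF that that] by simp
  have cont: "continuous_on {0..} (\<lambda>s. s * (P s - Q s))"
    by (intro continuous_intros lower.P_cont upper.P_cont)
  have "integral {0..r} (\<lambda>s. s * (P s - Q s)) \<le> integral {0..r} (\<lambda>s. s * (P s - Q s) * upper.growth s)"
    using le_growth by (intro integral_le integrable_on_atLeastAtMost_0 cont continuous_intros
        upper.continuous_on_growth) auto
  also have "\<dots> \<le> integral {0..} (\<lambda>r. r * (P r - Q r) * upper.growth r)"
    using nonneg le_growth
    by (intro integral_subset_le integrable_on_atLeastAtMost_0 int cont continuous_intros
        upper.continuous_on_growth) (auto intro: order_trans)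
  finally show ?thesis .
qed

lemma lower_growth_le:
  assumes int: "(\<lambda>r. r * (P r - Q r) * upper.growth r) integrable_on {0..}" and s: "s \<ge> 0"
  shows "lower.growth s \<le> upper.growth s
    * exp (Lam / (real n - 2) * integral {0..} (\<lambda>r. r * (P r - Q r) * upper.growth r))"
proof -
  have "(\<lambda>t. t * Q t) integrable_on {0..s}" "(\<lambda>t. t * (P t - Q t)) integrable_on {0..s}"
    by (intro integrable_on_atLeastAtMost_0 continuous_intros lower.P_cont upper.P_cont)+
  then have "integral {0..s} (\<lambda>t. t * P t)
      = integral {0..s} (\<lambda>t. t * Q t) + integral {0..s} (\<lambda>t. t * (P t - Q t))"
    by (simp add: algebra_simps flip: integral_add)
  moreover have "Lam / (real n - 2) * integral {0..s} (\<lambda>t. t * (P t - Q t))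
      \<le> Lam / (real n - 2) * integral {0..} (\<lambda>r. r * (P r - Q r) * upper.growth r)"
    using integral_weighted_gap_le[OF int s] lower.Lam_nonneg lower.n_ge_3 by (intro mult_left_mono) auto
  ultimately show ?thesis
    unfolding lower.growth_def upper.growth_def exp_add[symmetric] by (simp add: distrib_left)
qed

lemma lower_sol_le_upper_sol:
  defines "I \<equiv> integral {0..} (\<lambda>r. r * (P r - Q r) * upper.growth r)"
  assumes int: "(\<lambda>r. r * (P r - Q r) * upper.growth r) integrable_on {0..}"
    and b: "a * (1 + Lam / (real n - 2) * I * exp (Lam / (real n - 2) * I)) < b"
    and r: "r \<ge> 0"
  shows "lower.sol r \<le> upper.sol r"
proof (rule lower_sol_le_upper_sol_if_gap[OF _ _ r])
  define K where "K = a * Lam * exp (Lam / (real n - 2) * I)"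
  have K: "K \<ge> 0" unfolding K_def using lower.a_ge_1 lower.Lam_nonneg by simp
  show "a + a * (Lam / (real n - 2) * I * exp (Lam / (real n - 2) * I)) < b"
    using b by (simp add: algebra_simps)
  fix r :: real assume r: "r \<ge> 0"
  have "s * excess s \<le> K * (s * (P s - Q s) * upper.growth s)"
    if s: "s \<in> {0..r}" for s
  proof -
    have s0: "s \<ge> 0" using s by simp
    have "F (lower.sol s) \<le> Lam * lower.sol s"
      using lower.F_le_linear lower.sol_ge[OF s0] lower.a_ge_1 by simp
    also have "\<dots> \<le> Lam * (a * lower.growth s)"
      using lower.sol_le_barrier[OF s0] lower.Lam_nonneg unfolding lower.barrier_def
      by (rule mult_left_mono)
    also have "\<dots> \<le> K * upper.growth s"
      using lower_growth_le[OF int s0] lower.a_ge_1 lower.Lam_nonneg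
      by (simp add: K_def I_def mult_left_mono mult_ac)
    finally have "s * (P s - Q s) * F (lower.sol s) \<le> s * (P s - Q s) * (K * upper.growth s)"
      using s0 Q_le_P[OF s0] by (intro mult_left_mono) auto
    then show ?thesis by (simp add: excess_def mult_ac)
  qed
  then have "integral {0..r} (\<lambda>s. s * excess s)
      \<le> integral {0..r} (\<lambda>s. K * (s * (P s - Q s) * upper.growth s))"
    by (intro integral_le integrable_on_atLeastAtMost_0 continuous_intros lower.P_cont upper.P_cont
        upper.continuous_on_growth continuous_on_excess) auto
  also have "\<dots> \<le> K * I"
    unfolding integral_mult_right I_def using K r
    by (intro mult_left_mono integral_subset_le integrable_on_atLeastAtMost_0 int continuous_intros
        lower.P_cont upper.P_cont upper.continuous_on_growth)
      (auto intro!: mult_nonneg_nonneg Q_le_P order_trans[OF zero_le_one upper.growth_ge_1])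
  also have "\<dots> = (real n - 2) * (a * (Lam / (real n - 2) * I * exp (Lam / (real n - 2) * I)))"
    using lower.n_ge_3 by (simp add: K_def)
  finally show "integral {0..r} (\<lambda>s. s * excess s)
      \<le> (real n - 2) * (a * (Lam / (real n - 2) * I * exp (Lam / (real n - 2) * I)))" .
qed

lemma ordered_entire_large_solutions:
  defines "I \<equiv> integral {0..} (\<lambda>r. r * (P r - Q r) * upper.growth r)"
  assumes n: "n = DIM('a::euclidean_space)"
    and int: "(\<lambda>r. r * (P r - Q r) * upper.growth r) integrable_on {0..}"
    and b: "a * (1 + Lam / (real n - 2) * I * exp (Lam / (real n - 2) * I)) < b"
    and diverges: "filterlim (\<lambda>T. integral {1..T} (radial_slope n Q)) at_top at_top"
    and Fa: "F a > 0"
  shows "\<exists>v w :: 'a \<Rightarrow> real.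
           entire_classical_solution P F v \<and> entire_classical_solution Q F w
         \<and> (\<forall>x. v x > 0) \<and> (\<forall>x. w x > 0) \<and> large v \<and> large w
         \<and> (\<forall>x. v x \<le> w x)"
proof -
  have "F a \<le> F b"
    using lower_sol_le_upper_sol[OF int b[unfolded I_def], of 0] lower.sol_eq[of 0] upper.sol_eq[of 0]
      lower.a_ge_1 by (intro mono_onD[OF lower.F_mono]) auto
  then have large: "large (\<lambda>x::'a. lower.sol (norm x))" "large (\<lambda>x::'a. upper.sol (norm x))"
    using upper.P_nonneg Q_le_P Fa
    by (auto intro!: lower.large_radial_sol upper.large_radial_sol upper.P_cont diverges)
  show ?thesis
    by (rule exI[of _ "\<lambda>x. lower.sol (norm x)"], rule exI[of _ "\<lambda>x. upper.sol (norm x)"])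
      (simp add: large lower.sol_pos upper.sol_pos lower.entire_classical_solution_sol[OF n]
        upper.entire_classical_solution_sol[OF n] lower_sol_le_upper_sol[OF int b[unfolded I_def]])
qed

end

lemma le_SUP_ratio_mult:
  fixes f :: "real \<Rightarrow> real"
  assumes "bdd_above ((\<lambda>s. f s / s) ` {1..})" "s \<ge> 1"
  shows "f s \<le> (SUP s\<in>{1..}. f s / s) * s"
  using cSUP_upper[OF _ assms(1), of s] assms(2) by (simp add: divide_le_eq)

theorem lemma1:
  fixes p :: "'a::euclidean_space \<Rightarrow> real" and f :: "real \<Rightarrow> real" and \<alpha> :: real
    and \<phi> \<psi> h \<Psi> :: "real \<Rightarrow> real" and \<Lambda> \<Lambda>N :: real
  assumes dim: "DIM('a) \<ge> 3"
    and alpha: "0 < \<alpha>" "\<alpha> < 1"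
    and p_holder: "loc_holder_on \<alpha> UNIV p"
    and p_nonneg: "\<forall>x. p x \<ge> 0"
    and f_nonneg: "\<forall>s\<ge>0. f s \<ge> 0"
    and f_mono: "mono_on {0..} f"
    and f_holder: "loc_holder_on \<alpha> {0..} f"
    and f0: "f 0 = 0"
    and f_pos: "\<forall>s>0. f s > 0"
    and Lambda_fin: "bdd_above ((\<lambda>s. f s / s) ` {1..})"
    and Lambda_def: "\<Lambda> = (SUP s\<in>{1..}. f s / s)"
    and phi_def: "\<forall>r. \<phi> r = (SUP x\<in>sphere 0 r. p x)"
    and psi_def: "\<forall>r. \<psi> r = (INF x\<in>sphere 0 r. p x)"
    and h_def: "\<forall>r. h r = \<phi> r - \<psi> r"
    and LambdaN_def: "\<Lambda>N = \<Lambda> / (real DIM('a) - 2)"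
    and Psi_def: "\<forall>r. \<Psi> r = exp (\<Lambda>N * integral {0..r} (\<lambda>s. s * \<psi> s))"
    and int_fin: "(\<lambda>r. r * h r * \<Psi> r) integrable_on {0..}"
    and int_inf: "filterlim (\<lambda>T. integral {1..T} (\<lambda>t. exp (- t) * t powr (1 - real DIM('a))
                    * integral {0..t} (\<lambda>s. exp s * s ^ (DIM('a) - 1) * \<psi> s))) at_top at_top"
  shows "\<exists>v w :: 'a \<Rightarrow> real.
           entire_classical_solution \<phi> f v \<and> entire_classical_solution \<psi> f w
         \<and> (\<forall>x. v x > 0) \<and> (\<forall>x. w x > 0) \<and> large v \<and> large w
         \<and> (\<forall>x. v x \<le> w x)"
proof -
  have p: "continuous_on UNIV p" and f: "continuous_on {0..} f"
    using continuous_on_if_loc_holder_on[OF p_holder alpha(1)]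
      continuous_on_if_loc_holder_on[OF f_holder alpha(1)] by auto
  have \<phi>: "\<phi> = (\<lambda>r. SUP x\<in>sphere 0 r. p x)" and \<psi>: "\<psi> = (\<lambda>r. INF x\<in>sphere 0 r. p x)"
    using phi_def psi_def by auto
  have \<psi>_nonneg: "\<psi> r \<ge> 0" and \<psi>_le_\<phi>: "\<psi> r \<le> \<phi> r" if "r \<ge> 0" for r
    unfolding \<phi> \<psi> using that p_nonneg INF_sphere_le_SUP_sphere[OF p that]
    by (auto intro!: cINF_greatest)
  have "f 1 \<le> \<Lambda>" "f 1 > 0"
    using le_SUP_ratio_mult[OF Lambda_fin, of 1] Lambda_def f_pos by simp_all
  then have \<Lambda>: "\<Lambda> \<ge> 0" by simp
  define I where "I = integral {0..} (\<lambda>r. r * h r * \<Psi> r)"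
  have "I \<ge> 0"
    unfolding I_def using int_fin \<psi>_le_\<phi> by (intro integral_nonneg) (auto simp: h_def Psi_def)
  define b where "b = 2 + \<Lambda>N * I * exp (\<Lambda>N * I)"
  have "b \<ge> 2" using \<open>I \<ge> 0\<close> \<Lambda> dim by (simp add: b_def LambdaN_def)
  interpret radial_pair "DIM('a)" \<phi> \<psi> f \<Lambda> 1 b
    using dim continuous_on_SUP_sphere[OF p] continuous_on_INF_sphere[OF p] \<psi>_nonneg \<psi>_le_\<phi>
      f f_mono f_nonneg le_SUP_ratio_mult[OF Lambda_fin] \<open>b \<ge> 2\<close>
    by unfold_locales (auto simp: \<phi> \<psi> Lambda_def intro: order_trans)
  have "filterlim (\<lambda>T. integral {1..T} (radial_slope DIM('a) \<psi>)) at_top at_top"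
    using int_inf by (rule filterlim_cong[THEN iffD1, rotated 3])
      (auto intro!: always_eventually integral_cong simp: radial_slope_eq_powr)
  moreover have "\<Psi> = upper.growth" and "h = (\<lambda>r. \<phi> r - \<psi> r)"
    using Psi_def h_def LambdaN_def by (auto simp: upper.growth_def)
  ultimately show ?thesis
    using int_fin \<open>f 1 > 0\<close>
    by (intro ordered_entire_large_solutions) (simp_all add: I_def b_def LambdaN_def)
qed

end
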